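(* Let $\alpha\in(0,2)$, $c>0$, $a>0$, and let $\{G^{\alpha,c,a}(s):s\ge0\}$ be the centered Gaussian process with covariance $\mathrm{Cov}(G^{\alpha,c,a}(s),G^{\alpha,c,a}(r))=\frac12\big(f^{\alpha,c,a}(s)+f^{\alpha,c,a}(r)-f^{\alpha,c,a}(|s-r|)\big)$. Then for fixed $s,r>0$, $$\mathrm{Cov}\big(G^{\alpha,c,a}(s)-G^{\alpha,c,a}(0),\,G^{\alpha,c,a}(r+s+u)-G^{\alpha,c,a}(s+u)\big)\sim k\,u^{-(\alpha+1)}\quad\text{as }u\to\infty,$$ where $k$ is a constant depending on $\alpha,c,a,s,r$.
   Context: Define $f^{\alpha,c,a}(0)=0$ and for $s>0$, $f^{\alpha,c,a}(s)=\frac{4s}{a\pi}\int_0^\infty\frac{\sin^2(u/2)}{u^2}(1-e^{-2c(u/s)^\alpha})\,\mathrm{d}u$. For functions $g,h$, $g\sim h$ means $g/h\to1$. *)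

theory Defs
  imports "HOL-Analysis.Analysis" "HOL-Library.Landau_Symbols"
begin

definition fACA :: "real \<Rightarrow> real \<Rightarrow> real \<Rightarrow> real \<Rightarrow> real" where
  "fACA \<alpha> c a s =
     (if s = 0 then 0
      else 4 * s / (a * pi) *
        (LBINT u:{0<..}. (sin (u / 2))\<^sup>2 / u\<^sup>2 * (1 - exp (- 2 * c * (u / s) powr \<alpha>))))"

definition covG :: "real \<Rightarrow> real \<Rightarrow> real \<Rightarrow> real \<Rightarrow> real \<Rightarrow> real" where
  "covG \<alpha> c a s r = (fACA \<alpha> c a s + fACA \<alpha> c a r - fACA \<alpha> c a \<bar>s - r\<bar>) / 2"

end

theory Submission
  imports Defs "HOL-Complex_Analysis.Complex_Analysis" "HOL-Real_Asymp.Real_Asymp"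
begin

(* Rescaling the variable of integration, f(t) = 4/(a pi) * int_0^oo sin^2(t rho/2)/rho^2 m(rho) d rho
   with m(rho) = 1 - exp(-2c rho^alpha), and the covariance in question is half the second difference
   f(u+r+s) - f(u+r) - f(u+s) + f(u) = -2/(a pi) * Re int_0^oo e^(iu rho) P(rho) m(rho) d rho,
   where P(z) = (e^(irz) - 1)(e^(isz) - 1)/z^2 is entire. The integrand is holomorphic in the open
   first quadrant, so by Cauchy's theorem the ray of integration may be turned to the angle pi/4:
   there e^(iuz) decays exponentially, while alpha < 2 keeps Re z^alpha >= 0 and hence m bounded.
   Substituting z = w/u, u^alpha m(w/u) -> 2c w^alpha and P(w/u) -> P(0) = -rs, so by dominated
   convergence u^(alpha+1) times the second difference tends to a multiple of
   int_0^oo e^(iw) w^alpha dw along the ray; turning the ray once more, to the imaginary axis,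
   evaluates this as i^(alpha+1) Gamma(alpha+1). The resulting constant
   k = -2crs Gamma(alpha+1) sin(alpha pi/2)/(a pi) is nonzero for 0 < alpha < 2. *)

lemma one_minus_cos_le_sq_half: "1 - cos (x::real) \<le> x\<^sup>2 / 2"
proof -
  have "\<bar>sin (x/2)\<bar> \<le> \<bar>x/2\<bar>" by (rule abs_sin_x_le_abs_x)
  then have "(sin (x/2))\<^sup>2 \<le> (x/2)\<^sup>2" by (metis power2_abs power_mono abs_ge_zero)
  then show ?thesis using cos_double_sin[of "x/2"] by (simp add: power2_eq_square)
qed

lemma norm_exp_minus_1_le:
  fixes w :: complex
  assumes "Re w \<le> 0"
  shows "norm (exp w - 1) \<le> norm w"
proof -
  define a b where "a = Re w" and "b = Im w"
  have a: "a \<le> 0" using assms by (simp add: a_def)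
  have "(norm (exp w - 1))\<^sup>2 = (exp a * cos b - 1)\<^sup>2 + (exp a * sin b)\<^sup>2"
    by (simp add: exp_eq_polar[of w] a_def b_def cmod_power2)
  also have "\<dots> = (exp a - 1)\<^sup>2 + 2 * exp a * (1 - cos b)"
  proof -
    have "(exp a * cos b)\<^sup>2 + (exp a * sin b)\<^sup>2 = (exp a)\<^sup>2"
      by (simp add: power_mult_distrib flip: distrib_left)
    then show ?thesis by (simp add: power2_diff algebra_simps)
  qed
  also have "\<dots> \<le> a\<^sup>2 + b\<^sup>2"
  proof (rule add_mono)
    have "0 \<le> 1 - exp a" "1 - exp a \<le> - a" using a exp_ge_add_one_self[of a] by (auto simp del: exp_ge_add_one_self)
    then show "(exp a - 1)\<^sup>2 \<le> a\<^sup>2" by (metis power2_commute power2_minus power_mono)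
    have "exp a * (1 - cos b) \<le> 1 * (1 - cos b)" using a by (intro mult_right_mono) auto
    then show "2 * exp a * (1 - cos b) \<le> b\<^sup>2" using one_minus_cos_le_sq_half[of b] by simp
  qed
  also have "\<dots> = (norm w)\<^sup>2" by (simp add: a_def b_def cmod_power2)
  finally show ?thesis by (simp add: power2_le_iff_abs_le)
qed

definition exp_quot :: "complex \<Rightarrow> complex" where
  "exp_quot w = (if w = 0 then 1 else (exp w - 1) / w)"

lemma exp_minus_1_eq_exp_quot: "exp w - 1 = w * exp_quot w"
  by (simp add: exp_quot_def)

lemma norm_exp_quot_le_1: "Re w \<le> 0 \<Longrightarrow> norm (exp_quot w) \<le> 1"
  using norm_exp_minus_1_le[of w] by (auto simp: exp_quot_def norm_divide divide_le_eq)

lemma isCont_exp_quot: "isCont exp_quot w"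
proof (cases "w = 0")
  case True
  have "((\<lambda>y. (exp y - 1) / y) \<longlongrightarrow> (1::complex)) (at 0)"
    using DERIV_exp[of "0::complex"] by (simp add: has_field_derivative_iff)
  then have "(exp_quot \<longlongrightarrow> 1) (at 0)"
    by (rule Lim_transform_eventually) (auto simp: exp_quot_def eventually_at_filter)
  then show ?thesis using True by (simp add: isCont_def exp_quot_def)
next
  case False
  have "isCont (\<lambda>y. (exp y - 1) / y) w" using False by (intro continuous_intros) auto
  moreover have "eventually (\<lambda>y. exp_quot y = (exp y - 1) / y) (nhds w)"
    using eventually_nhds_in_open[of "-{0}" w] False
    by (auto elim!: eventually_mono simp: exp_quot_def)
  ultimately show ?thesis using isCont_cong[of exp_quot "\<lambda>y. (exp y - 1) / y" w] by simp
qed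

section \<open>Turning a ray of integration in the first quadrant\<close>

definition quadrant :: "complex set" where
  "quadrant = {z. 0 \<le> Re z \<and> 0 \<le> Im z}"

lemma convex_quadrant: "convex quadrant"
proof -
  have "quadrant = {z. Re z \<ge> 0} \<inter> {z. Im z \<ge> 0}" by (auto simp: quadrant_def)
  then show ?thesis
    using convex_Int[OF convex_halfspace_Re_ge[of 0] convex_halfspace_Im_ge[of 0]] by simp
qed

lemma interior_quadrant: "interior quadrant = {z. 0 < Re z \<and> 0 < Im z}"
proof (rule interior_unique)
  show "open {z. 0 < Re z \<and> 0 < Im z}"
    by (intro open_Collect_conj open_Collect_less continuous_intros)
  fix T assume T: "T \<subseteq> quadrant" "open T"
  show "T \<subseteq> {z. 0 < Re z \<and> 0 < Im z}"
  proof
    fix z assume "z \<in> T"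
    obtain e where "e > 0" "ball z e \<subseteq> T" using T(2) \<open>z \<in> T\<close> open_contains_ball by blast
    with T(1) have e: "e > 0" "ball z e \<subseteq> quadrant" by auto
    have "z - of_real (e/2) \<in> quadrant" "z - \<i> * of_real (e/2) \<in> quadrant"
      using e by (auto intro!: subsetD[OF e(2)] simp: dist_norm norm_mult)
    then show "z \<in> {z. 0 < Re z \<and> 0 < Im z}" using e by (auto simp: quadrant_def)
  qed
qed (auto simp: quadrant_def)

lemma cis_in_quadrant: "0 \<le> x \<Longrightarrow> 0 \<le> \<phi> \<Longrightarrow> \<phi> \<le> pi/2 \<Longrightarrow> complex_of_real x * cis \<phi> \<in> quadrant"
  by (auto simp: quadrant_def intro!: mult_nonneg_nonneg cos_ge_zero sin_ge_zero)

lemma continuous_on_ray: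
  assumes "continuous_on quadrant F" "0 \<le> \<phi>" "\<phi> \<le> pi/2"
  shows "continuous_on {0..} (\<lambda>x. F (of_real x * cis \<phi>))"
  by (rule continuous_on_compose2[OF assms(1)])
    (use assms cis_in_quadrant in \<open>auto intro!: continuous_intros\<close>)

lemma has_contour_integral_linepath_0:
  fixes F :: "complex \<Rightarrow> complex"
  assumes R: "0 < R" and cont: "continuous_on {0..R} (\<lambda>x. F (of_real x * w))"
  shows "(F has_contour_integral (w * integral {0..R} (\<lambda>x. F (of_real x * w))))
           (linepath 0 (of_real R * w))"
proof -
  let ?g = "\<lambda>x. F (of_real x * w)"
  have "(?g has_integral integral {0..R} ?g) {0..R}"
    using cont by (intro integrable_integral integrable_continuous_real)
  from has_integral_stretch_real[OF this, of R] R
  have "((\<lambda>x. ?g (R * x)) has_integral (1 / R) *\<^sub>R integral {0..R} ?g) {0..1}"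
    by simp
  from has_integral_mult_left[OF this, of "of_real R * w"]
  have "((\<lambda>x. ?g (R * x) * (of_real R * w)) has_integral (w * integral {0..R} ?g)) {0..1}"
    using R by (simp add: scaleR_conv_of_real field_simps)
  then show ?thesis
    by (simp add: has_contour_integral_linepath scaleR_conv_of_real mult.assoc mult.left_commute)
qed

lemma has_contour_integral_sector_boundary:
  fixes F :: "complex \<Rightarrow> complex"
  assumes cont: "continuous_on quadrant F" and holo: "F holomorphic_on interior quadrant"
    and t: "0 \<le> t1" "t1 \<le> t2" "t2 \<le> pi/2" and R: "0 < R"
  shows "(F has_contour_integral 0)
           (linepath 0 (of_real R * cis t1) +++ (part_circlepath 0 R t1 t2 +++ linepath (of_real R * cis t2) 0))"
    (is "(F has_contour_integral 0) (?g1 +++ (?g2 +++ ?g3))")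
proof (rule Cauchy_theorem_convex[OF cont convex_quadrant, of "{}"])
  have "closed_segment 0 (of_real R * cis t1) \<subseteq> quadrant" "closed_segment (of_real R * cis t2) 0 \<subseteq> quadrant"
    using t R by (intro closed_segment_subset convex_quadrant cis_in_quadrant[of 0 0, simplified] cis_in_quadrant;
        simp)+
  moreover have "path_image ?g2 \<subseteq> quadrant"
    using t R by (auto simp: path_image_part_circlepath' closed_segment_eq_real_ivl intro!: cis_in_quadrant)
  ultimately show "path_image (?g1 +++ (?g2 +++ ?g3)) \<subseteq> quadrant"
    using path_image_join_subset[of ?g1 "?g2 +++ ?g3"] path_image_join_subset[of ?g2 ?g3]
    by (simp only: path_image_linepath) blast
  show "valid_path (?g1 +++ (?g2 +++ ?g3))"
    by (intro valid_path_join) (auto simp: cis_conv_exp)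
  show "F field_differentiable at z" if "z \<in> interior quadrant - {}" for z
    using that holomorphic_on_imp_differentiable_at[OF holo open_interior] by simp
qed (auto simp: cis_conv_exp)

lemma norm_sector_boundary_integral_le:
  fixes F :: "complex \<Rightarrow> complex"
  assumes cont: "continuous_on quadrant F" and holo: "F holomorphic_on interior quadrant"
    and t: "0 \<le> t1" "t1 \<le> t2" "t2 \<le> pi/2" and R: "0 < R"
    and bound: "\<And>\<phi>. t1 \<le> \<phi> \<Longrightarrow> \<phi> \<le> t2 \<Longrightarrow> norm (F (of_real R * cis \<phi>)) \<le> B"
  shows "norm (cis t1 * integral {0..R} (\<lambda>x. F (of_real x * cis t1))
             - cis t2 * integral {0..R} (\<lambda>x. F (of_real x * cis t2))) \<le> B * R * (t2 - t1)"
proof -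
  define J where "J \<phi> = integral {0..R} (\<lambda>x. F (of_real x * cis \<phi>))" for \<phi>
  let ?g1 = "linepath 0 (of_real R * cis t1)"
  let ?g2 = "part_circlepath 0 R t1 t2"
  let ?g3 = "linepath (of_real R * cis t2) 0"
  have ray: "(F has_contour_integral (cis \<phi> * J \<phi>)) (linepath 0 (of_real R * cis \<phi>))"
    if "0 \<le> \<phi>" "\<phi> \<le> pi/2" for \<phi>
    unfolding J_def using R that
    by (intro has_contour_integral_linepath_0 continuous_on_subset[OF continuous_on_ray[OF cont]]) auto
  have side1: "(F has_contour_integral (cis t1 * J t1)) ?g1" using t by (intro ray) auto
  have side2: "(F has_contour_integral (- (cis t2 * J t2))) ?g3"
    using has_contour_integral_reversepath[OF valid_path_linepath ray[of t2]] t by simp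
  have arc: "path_image ?g2 \<subseteq> quadrant"
    using t R by (auto simp: path_image_part_circlepath' closed_segment_eq_real_ivl intro!: cis_in_quadrant)
  have "F contour_integrable_on ?g2"
    by (rule contour_integrable_continuous_part_circlepath[OF continuous_on_subset[OF cont arc]])
  then obtain A where arc_integral: "(F has_contour_integral A) ?g2" by (auto simp: contour_integrable_on_def)
  have A_bound: "norm A \<le> B * R * (t2 - t1)"
  proof (rule has_contour_integral_bound_part_circlepath[OF arc_integral])
    show "0 \<le> B" using bound[of t1] t by (meson norm_ge_zero order_trans order_refl)
    fix z assume "z \<in> path_image ?g2"
    then obtain \<phi> where "\<phi> \<in> {t1..t2}" "z = of_real R * cis \<phi>"
      by (auto simp: path_image_part_circlepath' closed_segment_eq_real_ivl t)
    then show "norm (F z) \<le> B" using bound by auto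
  qed (use R t in auto)
  have "cis t1 * J t1 + (A + - (cis t2 * J t2)) = 0"
  proof (rule has_contour_integral_unique)
    show "(F has_contour_integral (cis t1 * J t1 + (A + - (cis t2 * J t2)))) (?g1 +++ (?g2 +++ ?g3))"
      by (intro has_contour_integral_join side1 arc_integral side2 valid_path_join) (auto simp: cis_conv_exp)
    show "(F has_contour_integral 0) (?g1 +++ (?g2 +++ ?g3))"
      by (rule has_contour_integral_sector_boundary[OF cont holo t R])
  qed
  then have "cis t1 * J t1 - cis t2 * J t2 = - A" by (simp add: algebra_simps)
  with A_bound show ?thesis unfolding J_def[symmetric] by simp
qed

lemma ray_integral_rotate:
  fixes F :: "complex \<Rightarrow> complex" and M :: "real \<Rightarrow> real"
  assumes cont: "continuous_on quadrant F" and holo: "F holomorphic_on interior quadrant"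
    and t: "0 \<le> t1" "t1 \<le> t2" "t2 \<le> pi/2"
    and M: "\<And>R \<phi>. 1 \<le> R \<Longrightarrow> t1 \<le> \<phi> \<Longrightarrow> \<phi> \<le> t2 \<Longrightarrow> norm (F (of_real R * cis \<phi>)) \<le> M R"
    and M_decay: "((\<lambda>R. R * M R) \<longlongrightarrow> 0) at_top"
    and int1: "set_integrable lborel {0..} (\<lambda>x. F (of_real x * cis t1))"
    and int2: "set_integrable lborel {0..} (\<lambda>x. F (of_real x * cis t2))"
  shows "cis t1 * (LBINT x:{0..}. F (of_real x * cis t1)) = cis t2 * (LBINT x:{0..}. F (of_real x * cis t2))"
proof -
  define D where "D R = cis t1 * integral {0..R} (\<lambda>x. F (of_real x * cis t1))
                      - cis t2 * integral {0..R} (\<lambda>x. F (of_real x * cis t2))" for R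
  have "((\<lambda>R. integral {0..R} (\<lambda>x. F (of_real x * cis \<phi>))) \<longlongrightarrow> (LBINT x:{0..}. F (of_real x * cis \<phi>))) at_top"
    if int: "set_integrable lborel {0..} (\<lambda>x. F (of_real x * cis \<phi>))" for \<phi>
  proof (rule Lim_transform_eventually[OF tendsto_set_lebesgue_integral_at_top[OF _ int]])
    show "\<forall>\<^sub>F R in at_top. (LBINT x:{0..R}. F (of_real x * cis \<phi>)) = integral {0..R} (\<lambda>x. F (of_real x * cis \<phi>))"
      using set_borel_integral_eq_integral(2)[OF set_integrable_subset[OF int]] by auto
  qed auto
  from this[OF int1] this[OF int2] have D_limit: "(D \<longlongrightarrow> cis t1 * (LBINT x:{0..}. F (of_real x * cis t1)) - cis t2 * (LBINT x:{0..}. F (of_real x * cis t2))) at_top"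
    unfolding D_def by (intro tendsto_intros)
  have D_null: "(D \<longlongrightarrow> 0) at_top"
  proof (rule Lim_null_comparison)
    show "\<forall>\<^sub>F R in at_top. norm (D R) \<le> R * M R * (t2 - t1)"
    proof (rule eventually_mono[OF eventually_ge_at_top[of 1]])
      fix R :: real assume "1 \<le> R"
      have "norm (D R) \<le> M R * R * (t2 - t1)"
        unfolding D_def by (rule norm_sector_boundary_integral_le[OF cont holo t]) (use \<open>1 \<le> R\<close> M in auto)
      then show "norm (D R) \<le> R * M R * (t2 - t1)" by (simp add: mult_ac)
    qed
    show "((\<lambda>R. R * M R * (t2 - t1)) \<longlongrightarrow> 0) at_top"
      using tendsto_mult_left_zero[OF M_decay, of "t2 - t1"] by simp
  qed
  have "cis t1 * (LBINT x:{0..}. F (of_real x * cis t1)) - cis t2 * (LBINT x:{0..}. F (of_real x * cis t2)) = 0"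
    by (rule tendsto_unique[OF trivial_limit_at_top_linorder D_limit D_null])
  then show ?thesis by (simp only: right_minus_eq)
qed

lemma set_integrable_continuous_bound:
  fixes g :: "real \<Rightarrow> 'b::{banach, second_countable_topology}" and h :: "real \<Rightarrow> real"
  assumes "A \<in> sets borel" "continuous_on A g"
    and "\<And>x. x \<in> A \<Longrightarrow> x \<noteq> 0 \<Longrightarrow> norm (g x) \<le> h x"
    and "set_integrable lborel A h"
  shows "set_integrable lborel A g"
proof (rule set_integrable_bound[OF assms(4)])
  show "set_borel_measurable lborel A g"
    unfolding set_borel_measurable_def
    using borel_measurable_continuous_on_indicator[OF assms(1,2)] by simp
  show "AE x in lborel. x \<in> A \<longrightarrow> norm (g x) \<le> norm (h x)"
    using AE_lborel_singleton[of 0] by eventually_elim (use assms(3) in fastforce)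
qed

lemma set_integrable_inverse_1_plus_square: "set_integrable lborel {0..} (\<lambda>x::real. 1 / (1 + x\<^sup>2))"
proof -
  have "(\<integral>\<^sup>+x. ennreal (1 / (1 + x\<^sup>2)) * indicator {0..} x \<partial>lborel) = ennreal (pi/2 - arctan 0)"
  proof (rule nn_integral_FTC_atLeast)
    show "DERIV arctan x :> 1 / (1 + x\<^sup>2)" for x
      using DERIV_arctan[of x] by (simp add: divide_inverse)
  qed (auto intro: tendsto_arctan_at_top simp: add_pos_nonneg)
  then have "(\<integral>\<^sup>+x. ennreal (indicator {0..} x *\<^sub>R (1 / (1 + x\<^sup>2))) \<partial>lborel) = ennreal (pi/2)"
    by (subst nn_integral_cong[where v="\<lambda>x. ennreal (1 / (1 + x\<^sup>2)) * indicator {0..} x"])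
       (auto split: split_indicator)
  then show ?thesis
    unfolding set_integrable_def
    by (rule integrableI_nn_integral_finite[rotated 2]) (auto simp: add_pos_nonneg)
qed

lemma set_integrable_powr_mult_exp:
  fixes b \<beta> :: real
  assumes b: "0 < b" and \<beta>: "0 \<le> \<beta>"
  shows "set_integrable lborel {0..} (\<lambda>x. x powr \<beta> * exp (- (b * x)))"
proof -
  have "(\<lambda>t. complex_of_real t powr (complex_of_real (\<beta> + 1) - 1) / of_real (exp (b * t)))
          absolutely_integrable_on {0<..}"
    by (rule absolutely_integrable_Gamma_integral) (use b \<beta> in auto)
  then have int: "integrable lebesgue
      (\<lambda>t. indicator {0<..} t *\<^sub>R norm (complex_of_real t powr of_real \<beta> / of_real (exp (b * t))))"
    using absolutely_integrable_norm by (simp add: o_def set_integrable_def)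
  have eq: "norm (complex_of_real t powr of_real \<beta> / of_real (exp (b * t))) = t powr \<beta> * exp (- (b * t))"
    if "0 < t" for t
    using that by (simp add: norm_divide norm_powr_real_powr exp_minus inverse_eq_divide)
  have "integrable lebesgue (\<lambda>t. indicator {0<..} t *\<^sub>R (t powr \<beta> * exp (- (b * t))))"
    using int by (rule Bochner_Integration.integrable_cong[OF refl, THEN iffD1, rotated])
      (auto simp: eq split: split_indicator)
  then have "integrable lborel (\<lambda>t. indicator {0<..} t *\<^sub>R (t powr \<beta> * exp (- (b * t))))"
    by (subst (asm) integrable_completion) auto
  also have "(\<lambda>t::real. indicator {0<..} t *\<^sub>R (t powr \<beta> * exp (- (b * t))))
      = (\<lambda>t. indicator {0..} t *\<^sub>R (t powr \<beta> * exp (- (b * t))))"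
    by (rule ext) (auto split: split_indicator)
  finally show ?thesis unfolding set_integrable_def .
qed

lemma set_integral_powr_mult_exp_eq_Gamma:
  fixes \<beta> :: real
  assumes "0 \<le> \<beta>"
  shows "(LBINT x:{0..}. x powr \<beta> * exp (- x)) = Gamma (\<beta> + 1)"
proof -
  have "((\<lambda>t::real. t powr (\<beta> + 1 - 1) / exp t) has_integral Gamma (\<beta> + 1)) {0..}"
    using assms by (intro Gamma_integral_real) simp
  then have "((\<lambda>t. t powr \<beta> * exp (- t)) has_integral Gamma (\<beta> + 1)) {0..}"
    by (simp add: exp_minus divide_inverse)
  moreover have "(LBINT x:{0..}. x powr \<beta> * exp (- x)) = integral {0..} (\<lambda>t. t powr \<beta> * exp (- t))"
    using set_integrable_powr_mult_exp[of 1 \<beta>] assms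
    by (intro set_borel_integral_eq_integral(2)) simp
  ultimately show ?thesis by (simp add: integral_unique)
qed

lemma set_integral_rescale:
  fixes H :: "real \<Rightarrow> complex"
  assumes "0 < u"
  shows "(LBINT x:{0..}. H x) = of_real (1/u) * (LBINT x:{0..}. H (x / u))"
proof -
  have "(LBINT x:{0..}. H x)
      = \<bar>1/u\<bar> *\<^sub>R integral\<^sup>L lborel (\<lambda>x. indicator {0..} (0 + (1/u) * x) *\<^sub>R H (0 + (1/u) * x))"
    unfolding set_lebesgue_integral_def by (rule lborel_integral_real_affine) (use assms in simp)
  also have "(\<lambda>x. indicator {0..} (0 + (1/u) * x) *\<^sub>R H (0 + (1/u) * x)) = (\<lambda>x. indicator {0..} x *\<^sub>R H (x / u))"
    using assms by (intro ext) (simp add: indicator_def zero_le_divide_iff)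
  finally show ?thesis using assms by (simp add: set_lebesgue_integral_def scaleR_conv_of_real)
qed

lemma powr_of_real_cis:
  fixes R \<phi> \<alpha> :: real
  assumes "0 \<le> R" "-pi < \<phi>" "\<phi> \<le> pi" "0 < \<alpha>"
  shows "(complex_of_real R * cis \<phi>) powr (of_real \<alpha>) = of_real (R powr \<alpha>) * cis (\<alpha> * \<phi>)"
proof (cases "R = 0")
  case False
  then have R: "0 < R" using assms by simp
  have "ln (complex_of_real R * cis \<phi>) = ln (exp (of_real (ln R) + \<i> * of_real \<phi>))"
    using R by (simp add: exp_add cis_conv_exp exp_of_real)
  also have "\<dots> = of_real (ln R) + \<i> * of_real \<phi>"
    using assms by (intro Ln_exp) auto
  finally have "(complex_of_real R * cis \<phi>) powr (of_real \<alpha>)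
      = exp (of_real (\<alpha> * ln R)) * exp (\<i> * of_real (\<alpha> * \<phi>))"
    using R by (simp add: powr_def algebra_simps exp_add)
  then show ?thesis
    using R by (simp add: cis_conv_exp powr_def flip: exp_of_real)
qed (use assms in simp)

lemma Re_powr_of_real_cis_nonneg:
  fixes R \<phi> \<alpha> :: real
  assumes "0 \<le> R" "0 \<le> \<phi>" "\<phi> \<le> pi" "0 < \<alpha>" "\<alpha> * \<phi> \<le> pi / 2"
  shows "0 \<le> Re ((complex_of_real R * cis \<phi>) powr (of_real \<alpha>))"
proof -
  have "0 \<le> \<alpha> * \<phi>" using assms by simp
  then have "0 \<le> cos (\<alpha> * \<phi>)" using assms by (intro cos_ge_zero) linarith+
  moreover have "-pi < \<phi>" using assms pi_gt_zero by linarith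
  ultimately show ?thesis using assms by (subst powr_of_real_cis) auto
qed

definition incr_kernel :: "real \<Rightarrow> real \<Rightarrow> complex \<Rightarrow> complex" where
  "incr_kernel r s z = - of_real (r * s) * exp_quot (\<i> * of_real r * z) * exp_quot (\<i> * of_real s * z)"

lemma incr_kernel_eq:
  "z \<noteq> 0 \<Longrightarrow> incr_kernel r s z = (exp (\<i> * of_real r * z) - 1) * (exp (\<i> * of_real s * z) - 1) / z\<^sup>2"
  unfolding exp_minus_1_eq_exp_quot incr_kernel_def by (simp add: field_simps power2_eq_square)

lemma incr_kernel_0 [simp]: "incr_kernel r s 0 = - of_real (r * s)"
  by (simp add: incr_kernel_def exp_quot_def)

lemma continuous_on_incr_kernel: "continuous_on S (incr_kernel r s)"
  unfolding incr_kernel_def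
  by (intro continuous_intros continuous_on_compose2[OF continuous_at_imp_continuous_on, of UNIV exp_quot])
    (auto intro: isCont_exp_quot)

lemma incr_kernel_holomorphic_on: "0 \<notin> S \<Longrightarrow> incr_kernel r s holomorphic_on S"
proof -
  assume "0 \<notin> S"
  then have "(\<lambda>z. (exp (\<i> * of_real r * z) - 1) * (exp (\<i> * of_real s * z) - 1) / z\<^sup>2) holomorphic_on S"
    by (intro holomorphic_intros) auto
  then show ?thesis
    by (rule holomorphic_transform) (metis incr_kernel_eq \<open>0 \<notin> S\<close>)
qed

lemma norm_incr_kernel_le:
  assumes "0 \<le> Im z" "0 \<le> r" "0 \<le> s"
  shows "norm (incr_kernel r s z) \<le> r * s"
proof -
  have "norm (exp_quot (\<i> * of_real r * z)) \<le> 1" "norm (exp_quot (\<i> * of_real s * z)) \<le> 1"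
    using assms by (auto intro!: norm_exp_quot_le_1)
  then have "(r * s) * (norm (exp_quot (\<i> * of_real r * z)) * norm (exp_quot (\<i> * of_real s * z))) \<le> (r * s) * 1"
    using assms by (intro mult_left_mono mult_le_one) auto
  then show ?thesis
    using assms by (simp add: incr_kernel_def norm_mult abs_mult)
qed

lemma norm_incr_kernel_le_inverse_square:
  assumes "0 \<le> Im z" "z \<noteq> 0" "0 \<le> r" "0 \<le> s"
  shows "norm (incr_kernel r s z) \<le> 4 / (norm z)\<^sup>2"
proof -
  have "norm (exp (\<i> * of_real t * z) - 1) \<le> 2" if "0 \<le> t" for t
  proof -
    have "norm (exp (\<i> * of_real t * z)) \<le> 1" using assms that by simp
    then show ?thesis using norm_triangle_ineq4[of "exp (\<i> * of_real t * z)" 1] norm_one[where 'a=complex] by linarith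
  qed
  then have "norm (exp (\<i> * of_real r * z) - 1) * norm (exp (\<i> * of_real s * z) - 1) \<le> 2 * 2"
    using assms by (intro mult_mono) auto
  then show ?thesis
    using assms by (simp add: incr_kernel_eq norm_divide norm_mult norm_power divide_right_mono)
qed

lemma norm_incr_kernel_le_Cauchy:
  assumes "0 \<le> Im z" "0 \<le> r" "0 \<le> s"
  shows "norm (incr_kernel r s z) \<le> (r * s + 4) / (1 + (norm z)\<^sup>2)"
proof (cases "z = 0")
  case False
  have "norm (incr_kernel r s z) * (norm z)\<^sup>2 \<le> 4"
    using norm_incr_kernel_le_inverse_square[OF assms(1) False assms(2,3)] False
    by (simp add: field_simps)
  then have "norm (incr_kernel r s z) * (1 + (norm z)\<^sup>2) \<le> r * s + 4"
    using norm_incr_kernel_le[OF assms] by (simp add: algebra_simps)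
  then show ?thesis by (simp add: field_simps add_pos_nonneg)
qed (use norm_incr_kernel_le[OF assms] in simp)

definition cov_integrand :: "real \<Rightarrow> real \<Rightarrow> real \<Rightarrow> real \<Rightarrow> real \<Rightarrow> complex \<Rightarrow> complex" where
  "cov_integrand \<alpha> c r s u z =
     exp (\<i> * of_real u * z) * incr_kernel r s z * (1 - exp (- (2 * of_real c * z powr of_real \<alpha>)))"

definition gamma_integrand :: "real \<Rightarrow> complex \<Rightarrow> complex" where
  "gamma_integrand \<alpha> z = exp (\<i> * z) * z powr of_real \<alpha>"

lemma continuous_on_powr_quadrant: "0 < \<alpha> \<Longrightarrow> continuous_on quadrant (\<lambda>z. z powr of_real \<alpha>)"
  by (rule continuous_on_powr_complex) (auto simp: quadrant_def intro!: continuous_intros)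

lemma continuous_on_cov_integrand: "0 < \<alpha> \<Longrightarrow> continuous_on quadrant (cov_integrand \<alpha> c r s u)"
  unfolding cov_integrand_def
  by (intro continuous_intros continuous_on_incr_kernel continuous_on_powr_quadrant)

lemma continuous_on_gamma_integrand: "0 < \<alpha> \<Longrightarrow> continuous_on quadrant (gamma_integrand \<alpha>)"
  unfolding gamma_integrand_def by (intro continuous_intros continuous_on_powr_quadrant)

lemma cov_integrand_holomorphic_on: "cov_integrand \<alpha> c r s u holomorphic_on interior quadrant"
  unfolding cov_integrand_def interior_quadrant
  by (intro holomorphic_intros incr_kernel_holomorphic_on) (auto simp: complex_nonpos_Reals_iff)

lemma gamma_integrand_holomorphic_on: "gamma_integrand \<alpha> holomorphic_on interior quadrant"
  unfolding gamma_integrand_def interior_quadrant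
  by (intro holomorphic_intros) (auto simp: complex_nonpos_Reals_iff)

lemma norm_cov_integrand_le:
  assumes "0 < \<alpha>" "0 \<le> c" "0 \<le> \<rho>" "0 \<le> \<phi>" "\<phi> \<le> pi" "\<alpha> * \<phi> \<le> pi/2"
  shows "norm (cov_integrand \<alpha> c r s u (of_real \<rho> * cis \<phi>))
           \<le> 2 * exp (- (u * \<rho> * sin \<phi>)) * norm (incr_kernel r s (of_real \<rho> * cis \<phi>))"
    (is "_ \<le> 2 * ?E * ?K")
proof -
  let ?z = "complex_of_real \<rho> * cis \<phi>"
  have "0 \<le> Re (?z powr of_real \<alpha>)" using assms by (intro Re_powr_of_real_cis_nonneg) auto
  then have "norm (exp (- (2 * of_real c * ?z powr of_real \<alpha>))) \<le> 1" using assms by simp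
  then have "norm (1 - exp (- (2 * of_real c * ?z powr of_real \<alpha>))) \<le> 2"
    using norm_triangle_ineq4[of 1 "exp (- (2 * of_real c * ?z powr of_real \<alpha>))"]
    by (simp del: norm_exp_eq_Re)
  then have "?E * ?K * norm (1 - exp (- (2 * of_real c * ?z powr of_real \<alpha>))) \<le> ?E * ?K * 2"
    by (intro mult_left_mono) auto
  moreover have "norm (exp (\<i> * of_real u * ?z)) = ?E" by simp
  ultimately show ?thesis by (simp only: cov_integrand_def norm_mult mult_ac)
qed

lemma set_integrable_cov_integrand_real_axis:
  assumes "0 < \<alpha>" "0 \<le> c" "0 \<le> r" "0 \<le> s"
  shows "set_integrable lborel {0..} (\<lambda>x. cov_integrand \<alpha> c r s u (of_real x))"
proof (rule set_integrable_continuous_bound)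
  show "continuous_on {0..} (\<lambda>x. cov_integrand \<alpha> c r s u (of_real x))"
    using continuous_on_ray[OF continuous_on_cov_integrand[OF assms(1)], of 0] by simp
  show "set_integrable lborel {0..} (\<lambda>x. 2 * ((r * s + 4) * (1 / (1 + x\<^sup>2))))"
    by (intro set_integrable_mult_right set_integrable_inverse_1_plus_square)
  fix x :: real assume "x \<in> {0..}"
  then have "norm (cov_integrand \<alpha> c r s u (of_real x)) \<le> 2 * norm (incr_kernel r s (of_real x))"
    using assms norm_cov_integrand_le[of \<alpha> c x 0 r s u] by simp
  moreover have "norm (incr_kernel r s (of_real x)) \<le> (r * s + 4) * (1 / (1 + x\<^sup>2))"
    using assms norm_incr_kernel_le_Cauchy[of "complex_of_real x" r s] by simp
  ultimately show "norm (cov_integrand \<alpha> c r s u (of_real x)) \<le> 2 * ((r * s + 4) * (1 / (1 + x\<^sup>2)))"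
    by linarith
qed auto

lemma set_integrable_cov_integrand_ray:
  assumes "0 < \<alpha>" "\<alpha> \<le> 2" "0 \<le> c" "0 \<le> r" "0 \<le> s" "0 < u"
  shows "set_integrable lborel {0..} (\<lambda>x. cov_integrand \<alpha> c r s u (of_real x * cis (pi/4)))"
proof (rule set_integrable_continuous_bound)
  show "continuous_on {0..} (\<lambda>x. cov_integrand \<alpha> c r s u (of_real x * cis (pi/4)))"
    by (rule continuous_on_ray[OF continuous_on_cov_integrand]) (use assms in auto)
  have "0 < u * sin (pi/4)" using assms by (simp add: sin_45)
  then show "set_integrable lborel {0..} (\<lambda>x. 2 * (r * s) * (x powr 0 * exp (- (u * sin (pi/4) * x))))"
    by (intro set_integrable_mult_right set_integrable_powr_mult_exp) auto
  fix x :: real assume x: "x \<in> {0..}" "x \<noteq> 0"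
  have "norm (cov_integrand \<alpha> c r s u (of_real x * cis (pi/4)))
      \<le> 2 * exp (- (u * x * sin (pi/4))) * norm (incr_kernel r s (of_real x * cis (pi/4)))"
    using x assms by (intro norm_cov_integrand_le) auto
  also have "\<dots> \<le> 2 * exp (- (u * x * sin (pi/4))) * (r * s)"
    using assms x by (intro mult_left_mono norm_incr_kernel_le) (auto simp: sin_45)
  finally show "norm (cov_integrand \<alpha> c r s u (of_real x * cis (pi/4)))
      \<le> 2 * (r * s) * (x powr 0 * exp (- (u * sin (pi/4) * x)))"
    using x by (simp add: mult_ac)
qed auto

lemma cov_integrand_rotate:
  assumes "0 < \<alpha>" "\<alpha> \<le> 2" "0 \<le> c" "0 \<le> r" "0 \<le> s" "0 < u"
  shows "(LBINT x:{0..}. cov_integrand \<alpha> c r s u (of_real x))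
       = cis (pi/4) * (LBINT x:{0..}. cov_integrand \<alpha> c r s u (of_real x * cis (pi/4)))"
proof -
  have "cis 0 * (LBINT x:{0..}. cov_integrand \<alpha> c r s u (of_real x * cis 0))
      = cis (pi/4) * (LBINT x:{0..}. cov_integrand \<alpha> c r s u (of_real x * cis (pi/4)))"
  proof (rule ray_integral_rotate[where M = "\<lambda>R. 8 / R\<^sup>2"])
    show "continuous_on quadrant (cov_integrand \<alpha> c r s u)"
      using assms by (intro continuous_on_cov_integrand)
    show "((\<lambda>R::real. R * (8 / R\<^sup>2)) \<longlongrightarrow> 0) at_top" by real_asymp
    show "set_integrable lborel {0..} (\<lambda>x. cov_integrand \<alpha> c r s u (of_real x * cis 0))"
      using assms set_integrable_cov_integrand_real_axis[of \<alpha> c r s u] by simp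
    show "set_integrable lborel {0..} (\<lambda>x. cov_integrand \<alpha> c r s u (of_real x * cis (pi/4)))"
      using assms by (intro set_integrable_cov_integrand_ray)
    fix R \<phi> :: real assume R: "1 \<le> R" and \<phi>: "0 \<le> \<phi>" "\<phi> \<le> pi/4"
    have "0 \<le> sin \<phi>" using \<phi> by (intro sin_ge_zero) auto
    then have "exp (- (u * R * sin \<phi>)) \<le> 1" using R assms by simp
    moreover have "\<alpha> * \<phi> \<le> 2 * (pi/4)" using assms \<phi> by (intro mult_mono) auto
    ultimately have "norm (cov_integrand \<alpha> c r s u (of_real R * cis \<phi>)) \<le> 2 * 1 * (4 / (norm (of_real R * cis \<phi>))\<^sup>2)"
      using R \<phi> assms \<open>0 \<le> sin \<phi>\<close>
      by (intro order_trans[OF norm_cov_integrand_le] mult_mono norm_incr_kernel_le_inverse_square) auto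
    then show "norm (cov_integrand \<alpha> c r s u (of_real R * cis \<phi>)) \<le> 8 / R\<^sup>2"
      using R by (simp add: norm_mult)
  qed (use cov_integrand_holomorphic_on in auto)
  then show ?thesis by simp
qed

lemma set_integrable_gamma_integrand_ray:
  assumes "0 < \<alpha>" "0 < \<phi>" "\<phi> \<le> pi/2"
  shows "set_integrable lborel {0..} (\<lambda>x. gamma_integrand \<alpha> (of_real x * cis \<phi>))"
proof (rule set_integrable_continuous_bound)
  show "continuous_on {0..} (\<lambda>x. gamma_integrand \<alpha> (of_real x * cis \<phi>))"
    by (rule continuous_on_ray[OF continuous_on_gamma_integrand]) (use assms in auto)
  have "0 < sin \<phi>" using assms by (intro sin_gt_zero) auto
  then show "set_integrable lborel {0..} (\<lambda>x. x powr \<alpha> * exp (- (sin \<phi> * x)))"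
    using assms by (intro set_integrable_powr_mult_exp) auto
  fix x :: real assume "x \<in> {0..}"
  then show "norm (gamma_integrand \<alpha> (of_real x * cis \<phi>)) \<le> x powr \<alpha> * exp (- (sin \<phi> * x))"
    by (simp add: gamma_integrand_def norm_mult norm_powr_real_powr' mult_ac)
qed auto

lemma gamma_integrand_imaginary_axis:
  assumes "0 \<le> x" "0 < \<alpha>"
  shows "gamma_integrand \<alpha> (of_real x * \<i>) = cis (\<alpha> * (pi/2)) * of_real (x powr \<alpha> * exp (- x))"
proof -
  have "\<i> * (complex_of_real x * \<i>) = of_real (- x)"
    by (simp add: complex_eq_iff)
  then have "exp (\<i> * (complex_of_real x * \<i>)) = of_real (exp (- x))"
    by (simp only: exp_of_real)
  moreover have "(complex_of_real x * \<i>) powr of_real \<alpha> = of_real (x powr \<alpha>) * cis (\<alpha> * (pi/2))"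
    using powr_of_real_cis[of x "pi/2" \<alpha>] assms by simp
  ultimately show ?thesis by (simp add: gamma_integrand_def mult_ac)
qed

lemma set_integral_gamma_integrand_ray:
  assumes "0 < \<alpha>"
  shows "cis (pi/4) * (LBINT x:{0..}. gamma_integrand \<alpha> (of_real x * cis (pi/4)))
       = \<i> * cis (\<alpha> * (pi/2)) * of_real (Gamma (\<alpha> + 1))"
proof -
  have "cis (pi/4) * (LBINT x:{0..}. gamma_integrand \<alpha> (of_real x * cis (pi/4)))
      = cis (pi/2) * (LBINT x:{0..}. gamma_integrand \<alpha> (of_real x * cis (pi/2)))"
  proof (rule ray_integral_rotate[where M = "\<lambda>R. exp (- (R * sin (pi/4))) * R powr \<alpha>"])
    show "continuous_on quadrant (gamma_integrand \<alpha>)"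
      using assms by (intro continuous_on_gamma_integrand)
    show "((\<lambda>R. R * (exp (- (R * sin (pi/4))) * R powr \<alpha>)) \<longlongrightarrow> 0) at_top"
      unfolding sin_45 by real_asymp
    show "set_integrable lborel {0..} (\<lambda>x. gamma_integrand \<alpha> (of_real x * cis (pi/4)))"
      by (rule set_integrable_gamma_integrand_ray) (use assms in auto)
    show "set_integrable lborel {0..} (\<lambda>x. gamma_integrand \<alpha> (of_real x * cis (pi/2)))"
      by (rule set_integrable_gamma_integrand_ray) (use assms in auto)
    fix R \<phi> :: real assume R: "1 \<le> R" and \<phi>: "pi/4 \<le> \<phi>" "\<phi> \<le> pi/2"
    have "sin (pi/4) \<le> sin \<phi>" using \<phi> by (intro sin_monotone_2pi_le) auto
    then have "exp (- (R * sin \<phi>)) \<le> exp (- (R * sin (pi/4)))" using R by simp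
    then show "norm (gamma_integrand \<alpha> (of_real R * cis \<phi>)) \<le> exp (- (R * sin (pi/4))) * R powr \<alpha>"
      using R by (simp add: gamma_integrand_def norm_mult norm_powr_real_powr' mult_ac)
  qed (use gamma_integrand_holomorphic_on in auto)
  also have "(LBINT x:{0..}. gamma_integrand \<alpha> (of_real x * cis (pi/2)))
      = (LBINT x:{0..}. gamma_integrand \<alpha> (of_real x * \<i>))"
    by simp
  also have "\<dots>
      = (LBINT x:{0..}. cis (\<alpha> * (pi/2)) * of_real (x powr \<alpha> * exp (- x)))"
    using assms by (intro set_lebesgue_integral_cong) (auto simp: gamma_integrand_imaginary_axis)
  also have "\<dots> = cis (\<alpha> * (pi/2)) * of_real (LBINT x:{0..}. x powr \<alpha> * exp (- x))"
    by (simp only: set_integral_mult_right set_integral_complex_of_real)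
  finally show ?thesis
    using assms by (simp add: set_integral_powr_mult_exp_eq_Gamma)
qed

section \<open>Fourier representation of the second difference of f\<close>

definition fACA_kernel :: "real \<Rightarrow> real \<Rightarrow> real \<Rightarrow> real \<Rightarrow> real" where
  "fACA_kernel \<alpha> c t \<rho> = (sin (t * \<rho> / 2))\<^sup>2 / \<rho>\<^sup>2 * (1 - exp (- 2 * c * \<rho> powr \<alpha>))"

lemma fACA_eq_integral:
  assumes "0 < t"
  shows "fACA \<alpha> c a t = 4 / (a * pi) * (LBINT \<rho>:{0<..}. fACA_kernel \<alpha> c t \<rho>)"
proof -
  let ?g = "\<lambda>u. (sin (u / 2))\<^sup>2 / u\<^sup>2 * (1 - exp (- 2 * c * (u / t) powr \<alpha>))"
  have "(LBINT u:{0<..}. ?g u)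
      = \<bar>t\<bar> *\<^sub>R integral\<^sup>L lborel (\<lambda>\<rho>. indicator {0<..} (0 + t * \<rho>) *\<^sub>R ?g (0 + t * \<rho>))"
    unfolding set_lebesgue_integral_def by (rule lborel_integral_real_affine) (use assms in simp)
  also have "(\<lambda>\<rho>. indicator {0<..} (0 + t * \<rho>) *\<^sub>R ?g (0 + t * \<rho>))
      = (\<lambda>\<rho>. (1 / t\<^sup>2) * (indicator {0<..} \<rho> *\<^sub>R fACA_kernel \<alpha> c t \<rho>))"
    using assms
    by (intro ext) (auto simp: fACA_kernel_def zero_less_mult_iff power_mult_distrib field_simps
        split: split_indicator)
  finally have "(LBINT u:{0<..}. ?g u) = t * (1 / t\<^sup>2) * (LBINT \<rho>:{0<..}. fACA_kernel \<alpha> c t \<rho>)"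
    using assms by (simp add: set_lebesgue_integral_def)
  then show ?thesis using assms unfolding fACA_def by (simp add: power2_eq_square field_simps)
qed

lemma set_integrable_fACA_kernel:
  assumes "0 \<le> c"
  shows "set_integrable lborel {0<..} (fACA_kernel \<alpha> c t)"
proof (rule set_integrable_continuous_bound)
  show "continuous_on {0<..} (fACA_kernel \<alpha> c t)"
    unfolding fACA_kernel_def by (intro continuous_intros) auto
  show "set_integrable lborel {0<..} (\<lambda>x. (t\<^sup>2 / 4 + 1) * (1 / (1 + x\<^sup>2)))"
    by (intro set_integrable_mult_right set_integrable_subset[OF set_integrable_inverse_1_plus_square]) auto
  fix x :: real assume x: "x \<in> {0<..}"
  define S m where "S = (sin (t * x / 2))\<^sup>2" and "m = 1 - exp (- 2 * c * x powr \<alpha>)"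
  have m: "0 \<le> m" "m \<le> 1" using assms x by (auto simp: m_def)
  have S: "0 \<le> S" "S \<le> 1" by (auto simp: S_def abs_square_le_1)
  have "\<bar>sin (t * x / 2)\<bar> \<le> \<bar>t * x / 2\<bar>" by (rule abs_sin_x_le_abs_x)
  then have "S \<le> (t * x / 2)\<^sup>2" unfolding S_def by (metis abs_ge_zero power2_abs power_mono)
  then have S_small: "S / x\<^sup>2 \<le> t\<^sup>2 / 4" using x by (simp add: field_simps power2_eq_square)
  have "S / x\<^sup>2 * m * (1 + x\<^sup>2) = S / x\<^sup>2 * m + S * m" using x by (simp add: field_simps)
  also have "\<dots> \<le> t\<^sup>2 / 4 + 1"
    using S_small m S by (intro add_mono mult_le_one order_trans[OF mult_right_le_one_le]) auto
  finally have "S / x\<^sup>2 * m \<le> (t\<^sup>2 / 4 + 1) * (1 / (1 + x\<^sup>2))"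
    by (simp add: field_simps add_pos_nonneg)
  moreover have "0 \<le> S / x\<^sup>2 * m" using S m by simp
  ultimately show "norm (fACA_kernel \<alpha> c t x) \<le> (t\<^sup>2 / 4 + 1) * (1 / (1 + x\<^sup>2))"
    unfolding fACA_kernel_def S_def[symmetric] m_def[symmetric] by simp
qed auto

lemma Re_cov_integrand_of_real:
  assumes "0 < \<rho>"
  shows "Re (cov_integrand \<alpha> c r s u (of_real \<rho>)) =
    (cos ((u+r+s)*\<rho>) - cos ((u+r)*\<rho>) - cos ((u+s)*\<rho>) + cos (u*\<rho>)) / \<rho>\<^sup>2 * (1 - exp (- 2 * c * \<rho> powr \<alpha>))"
proof -
  have nonzero: "complex_of_real \<rho> \<noteq> 0" using assms by simp
  have "complex_of_real \<rho> powr of_real \<alpha> = of_real (\<rho> powr \<alpha>)"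
    using assms by (simp add: powr_of_real)
  then have damping: "1 - exp (- (2 * complex_of_real c * complex_of_real \<rho> powr of_real \<alpha>))
      = of_real (1 - exp (- 2 * c * \<rho> powr \<alpha>))"
    by (simp flip: exp_of_real)
  have cis: "exp (\<i> * complex_of_real b * of_real \<rho>) = cis (b * \<rho>)" for b
    by (simp add: cis_conv_exp mult.assoc)
  have "cov_integrand \<alpha> c r s u (of_real \<rho>)
      = (cis (u*\<rho>) * ((cis (r*\<rho>) - 1) * (cis (s*\<rho>) - 1))) / of_real (\<rho>\<^sup>2) * of_real (1 - exp (- 2 * c * \<rho> powr \<alpha>))"
    using assms unfolding cov_integrand_def incr_kernel_eq[OF nonzero] damping cis
    by (simp add: field_simps)
  also have "cis (u*\<rho>) * ((cis (r*\<rho>) - 1) * (cis (s*\<rho>) - 1))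
      = cis ((u+r+s)*\<rho>) - cis ((u+r)*\<rho>) - cis ((u+s)*\<rho>) + cis (u*\<rho>)"
    by (simp add: algebra_simps cis_mult)
  finally show ?thesis by simp
qed

lemma fACA_kernel_second_difference:
  assumes "0 < \<rho>"
  shows "fACA_kernel \<alpha> c (u+r+s) \<rho> - fACA_kernel \<alpha> c (u+r) \<rho> - fACA_kernel \<alpha> c (u+s) \<rho> + fACA_kernel \<alpha> c u \<rho>
       = - (1/2) * Re (cov_integrand \<alpha> c r s u (of_real \<rho>))"
proof -
  have sin_sq: "(sin (t * \<rho> / 2))\<^sup>2 = (1 - cos (t * \<rho>)) / 2" for t
    using cos_double_sin[of "t * \<rho> / 2"] by simp
  show ?thesis
    unfolding Re_cov_integrand_of_real[OF assms] fACA_kernel_def sin_sq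
    using assms by (simp add: field_simps)
qed

lemma fACA_second_difference_eq:
  assumes "0 < u" "0 < \<alpha>" "0 \<le> c" "0 \<le> r" "0 \<le> s"
  shows "fACA \<alpha> c a (u+r+s) - fACA \<alpha> c a (u+r) - fACA \<alpha> c a (u+s) + fACA \<alpha> c a u
     = - (2 / (a * pi)) * Re (LBINT x:{0..}. cov_integrand \<alpha> c r s u (of_real x))"
proof -
  let ?K = "fACA_kernel \<alpha> c"
  have int: "set_integrable lborel {0<..} (?K t)" for t
    using assms by (intro set_integrable_fACA_kernel)
  have "fACA \<alpha> c a (u+r+s) - fACA \<alpha> c a (u+r) - fACA \<alpha> c a (u+s) + fACA \<alpha> c a u
     = 4 / (a * pi) * (LBINT \<rho>:{0<..}. ?K (u+r+s) \<rho> - ?K (u+r) \<rho> - ?K (u+s) \<rho> + ?K u \<rho>)"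
    using assms
    by (simp add: fACA_eq_integral set_integral_add set_integral_diff int algebra_simps)
  also have "(LBINT \<rho>:{0<..}. ?K (u+r+s) \<rho> - ?K (u+r) \<rho> - ?K (u+s) \<rho> + ?K u \<rho>)
      = - (1/2) * (LBINT \<rho>:{0<..}. Re (cov_integrand \<alpha> c r s u (of_real \<rho>)))"
    by (subst set_integral_mult_right[symmetric], rule set_lebesgue_integral_cong)
      (auto simp: fACA_kernel_second_difference)
  also have "(LBINT \<rho>:{0<..}. Re (cov_integrand \<alpha> c r s u (of_real \<rho>)))
      = Re (LBINT x:{0..}. cov_integrand \<alpha> c r s u (of_real x))"
  proof -
    have int: "integrable lborel (\<lambda>x. indicator {0..} x *\<^sub>R cov_integrand \<alpha> c r s u (of_real x))"
      using set_integrable_cov_integrand_real_axis[of \<alpha> c r s u] assms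
      unfolding set_integrable_def by simp
    have "(\<lambda>\<rho>. indicator {0<..} \<rho> *\<^sub>R Re (cov_integrand \<alpha> c r s u (of_real \<rho>)))
        = (\<lambda>x. Re (indicator {0..} x *\<^sub>R cov_integrand \<alpha> c r s u (of_real x)))"
      by (rule ext) (auto simp: indicator_def cov_integrand_def)
    then show ?thesis
      unfolding set_lebesgue_integral_def by (simp only: integral_bounded_linear[OF bounded_linear_Re int])
  qed
  finally show ?thesis by simp
qed

section \<open>Asymptotics of the second difference\<close>

lemma cov_integrand_rescaled_eq:
  fixes x t \<alpha> c :: real
  assumes "0 \<le> x" "0 < t" "0 < \<alpha>"
  defines "W \<equiv> 2 * complex_of_real c * of_real (x powr \<alpha>) * cis (\<alpha> * (pi/4))"
  shows "of_real (t powr \<alpha>) * cov_integrand \<alpha> c r s t (of_real (x / t) * cis (pi/4))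
       = exp (\<i> * (of_real x * cis (pi/4))) * incr_kernel r s (of_real (x / t) * cis (pi/4))
           * (W * exp_quot (- (W / of_real (t powr \<alpha>))))"
proof -
  let ?T = "complex_of_real (t powr \<alpha>)"
  have "(of_real (x / t) * cis (pi/4)) powr (of_real \<alpha>) = of_real ((x / t) powr \<alpha>) * cis (\<alpha> * (pi/4))"
    using assms by (intro powr_of_real_cis) auto
  then have damping: "2 * complex_of_real c * (of_real (x / t) * cis (pi/4)) powr (of_real \<alpha>) = W / ?T"
    using assms by (simp add: W_def powr_divide field_simps)
  have quot: "1 - exp (- (W / ?T)) = (W / ?T) * exp_quot (- (W / ?T))"
    using exp_minus_1_eq_exp_quot[of "- (W / ?T)"] by (simp add: algebra_simps)
  have oscillation: "exp (\<i> * of_real t * (of_real (x / t) * cis (pi/4))) = exp (\<i> * (of_real x * cis (pi/4)))"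
    using assms by (simp add: field_simps)
  show ?thesis
    unfolding cov_integrand_def damping quot oscillation using assms by (simp add: field_simps)
qed

lemma rescaled_cov_integrand_tendsto:
  assumes "0 \<le> x" "0 < \<alpha>"
  shows "((\<lambda>u. of_real (u powr \<alpha>) * cov_integrand \<alpha> c r s u (of_real (x / u) * cis (pi/4)))
           \<longlongrightarrow> - of_real (2 * c * r * s) * gamma_integrand \<alpha> (of_real x * cis (pi/4))) at_top"
proof -
  define W where "W = 2 * complex_of_real c * of_real (x powr \<alpha>) * cis (\<alpha> * (pi/4))"
  have "((\<lambda>u. incr_kernel r s (of_real (x / u) * cis (pi/4))) \<longlongrightarrow> incr_kernel r s 0) at_top"
  proof (rule isCont_tendsto_compose[of 0 "incr_kernel r s"])
    show "isCont (incr_kernel r s) 0"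
      using continuous_on_incr_kernel[of UNIV] by (simp add: continuous_on_eq_continuous_at)
    have "((\<lambda>u. x / u) \<longlongrightarrow> 0) at_top" by real_asymp
    then show "((\<lambda>u. of_real (x / u) * cis (pi/4)) \<longlongrightarrow> 0) at_top"
      by (intro tendsto_mult_left_zero tendsto_of_real_iff[THEN iffD2, of _ 0, simplified])
  qed
  moreover have "((\<lambda>u. exp_quot (- (W / of_real (u powr \<alpha>)))) \<longlongrightarrow> exp_quot 0) at_top"
  proof (rule isCont_tendsto_compose[OF isCont_exp_quot])
    have "((\<lambda>u. inverse (u powr \<alpha>)) \<longlongrightarrow> 0) at_top" using assms by real_asymp
    then have "((\<lambda>u. W * of_real (inverse (u powr \<alpha>))) \<longlongrightarrow> 0) at_top"
      by (intro tendsto_mult_right_zero tendsto_of_real_iff[THEN iffD2, of _ 0, simplified])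
    then have "((\<lambda>u. - (W * of_real (inverse (u powr \<alpha>)))) \<longlongrightarrow> 0) at_top"
      using tendsto_minus by fastforce
    then show "((\<lambda>u. - (W / of_real (u powr \<alpha>))) \<longlongrightarrow> 0) at_top"
      by (simp add: divide_inverse)
  qed
  ultimately have rescaled_limit: "((\<lambda>u. exp (\<i> * (of_real x * cis (pi/4))) * incr_kernel r s (of_real (x / u) * cis (pi/4))
        * (W * exp_quot (- (W / of_real (u powr \<alpha>)))))
      \<longlongrightarrow> exp (\<i> * (of_real x * cis (pi/4))) * incr_kernel r s 0 * (W * exp_quot 0)) at_top"
    by (intro tendsto_intros)
  have limit_value: "exp (\<i> * (of_real x * cis (pi/4))) * incr_kernel r s 0 * (W * exp_quot 0)
      = - of_real (2 * c * r * s) * gamma_integrand \<alpha> (of_real x * cis (pi/4))"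
    using assms by (simp add: W_def gamma_integrand_def powr_of_real_cis exp_quot_def mult_ac)
  have "\<forall>\<^sub>F u in at_top. exp (\<i> * (of_real x * cis (pi/4))) * incr_kernel r s (of_real (x / u) * cis (pi/4))
        * (W * exp_quot (- (W / of_real (u powr \<alpha>))))
      = of_real (u powr \<alpha>) * cov_integrand \<alpha> c r s u (of_real (x / u) * cis (pi/4))"
    using eventually_gt_at_top[of 0]
  proof eventually_elim
    case (elim u)
    then show ?case
      unfolding W_def using assms by (intro cov_integrand_rescaled_eq[symmetric]) auto
  qed
  from Lim_transform_eventually[OF rescaled_limit this] show ?thesis unfolding limit_value .
qed

lemma norm_rescaled_cov_integrand_le:
  assumes "0 \<le> x" "0 < u" "0 < \<alpha>" "\<alpha> \<le> 2" "0 \<le> c" "0 \<le> r" "0 \<le> s"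
  shows "norm (of_real (u powr \<alpha>) * cov_integrand \<alpha> c r s u (of_real (x / u) * cis (pi/4)))
           \<le> 2 * c * r * s * (x powr \<alpha> * exp (- (sin (pi/4) * x)))"
proof -
  define W where "W = 2 * complex_of_real c * of_real (x powr \<alpha>) * cis (\<alpha> * (pi/4))"
  have "0 \<le> \<alpha> * (pi/4)" "\<alpha> * (pi/4) \<le> 2 * (pi/4)" using assms by auto
  then have "0 \<le> cos (\<alpha> * (pi/4))" by (intro cos_ge_zero) linarith+
  then have quot: "norm (exp_quot (- (W / of_real (u powr \<alpha>)))) \<le> 1"
    using assms by (intro norm_exp_quot_le_1) (simp add: W_def)
  have kernel: "norm (incr_kernel r s (of_real (x / u) * cis (pi/4))) \<le> r * s"
    using assms by (intro norm_incr_kernel_le) (auto simp: sin_45)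
  have "of_real (u powr \<alpha>) * cov_integrand \<alpha> c r s u (of_real (x / u) * cis (pi/4))
      = exp (\<i> * (of_real x * cis (pi/4))) * incr_kernel r s (of_real (x / u) * cis (pi/4))
          * (W * exp_quot (- (W / of_real (u powr \<alpha>))))"
    unfolding W_def using assms by (intro cov_integrand_rescaled_eq) auto
  also have "norm \<dots> = exp (- (sin (pi/4) * x)) * norm (incr_kernel r s (of_real (x / u) * cis (pi/4)))
      * (2 * c * x powr \<alpha> * norm (exp_quot (- (W / of_real (u powr \<alpha>)))))"
    using assms by (simp add: W_def norm_mult mult_ac)
  also have "\<dots> \<le> exp (- (sin (pi/4) * x)) * (r * s) * (2 * c * x powr \<alpha> * 1)"
    using assms quot kernel by (intro mult_mono mult_left_mono) auto
  finally show ?thesis by (simp add: mult_ac)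
qed

lemma continuous_on_rescaled_cov_integrand:
  assumes "0 < \<alpha>" "0 < v"
  shows "continuous_on {0..} (\<lambda>x. of_real (v powr \<alpha>) * cov_integrand \<alpha> c r s v (of_real (x / v) * cis (pi/4)))"
proof -
  have "(\<lambda>x. of_real (x / v) * cis (pi/4)) ` {0..} \<subseteq> quadrant"
    using assms by (intro image_subsetI cis_in_quadrant) auto
  then show ?thesis
    using assms
    by (intro continuous_intros continuous_on_compose2[OF continuous_on_cov_integrand[OF assms(1)]]) auto
qed

lemma set_integral_dominated_convergence_at_top:
  fixes G :: "real \<Rightarrow> real \<Rightarrow> 'b::{banach, second_countable_topology}"
  assumes cont: "\<And>u. 1 \<le> u \<Longrightarrow> continuous_on {0..} (G u)" and cont_limit: "continuous_on {0..} F"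
    and lim: "\<And>x. 0 \<le> x \<Longrightarrow> ((\<lambda>u. G u x) \<longlongrightarrow> F x) at_top"
    and bound: "\<And>u x. 1 \<le> u \<Longrightarrow> 0 \<le> x \<Longrightarrow> norm (G u x) \<le> B x"
    and int: "set_integrable lborel {0..} B"
  shows "((\<lambda>u. LBINT x:{0..}. G u x) \<longlongrightarrow> (LBINT x:{0..}. F x)) at_top"
proof -
  \<comment> \<open>Replacing u by max 1 u changes nothing eventually but makes every member of the family measurable.\<close>
  define g where "g u = (\<lambda>x. indicator {0..} x *\<^sub>R G (max 1 u) x)" for u
  have "((\<lambda>u. integral\<^sup>L lborel (g u)) \<longlongrightarrow> integral\<^sup>L lborel (\<lambda>x. indicator {0..} x *\<^sub>R F x)) at_top"
  proof (rule integral_dominated_convergence_at_top[where w = "\<lambda>x. indicator {0..} x *\<^sub>R B x"])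
    show "(\<lambda>x. indicator {0..} x *\<^sub>R F x) \<in> borel_measurable lborel"
      unfolding measurable_lborel2 by (intro borel_measurable_continuous_on_indicator cont_limit) auto
    show "g u \<in> borel_measurable lborel" for u
      unfolding g_def measurable_lborel2 by (intro borel_measurable_continuous_on_indicator cont) auto
    show "integrable lborel (\<lambda>x. indicator {0..} x *\<^sub>R B x)"
      using int unfolding set_integrable_def .
    show "AE x in lborel. ((\<lambda>u. g u x) \<longlongrightarrow> indicator {0..} x *\<^sub>R F x) at_top"
    proof (intro AE_I2)
      fix x :: real
      have "((\<lambda>u. G (max 1 u) x) \<longlongrightarrow> F x) at_top" if "0 \<le> x"
        using lim[OF that] eventually_ge_at_top[of 1]
        by (rule Lim_transform_eventually[OF _ eventually_mono]) (simp add: max_def)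
      then show "((\<lambda>u. g u x) \<longlongrightarrow> indicator {0..} x *\<^sub>R F x) at_top"
        by (cases "0 \<le> x") (simp_all add: g_def)
    qed
    show "\<forall>\<^sub>F u in at_top. AE x in lborel. norm (g u x) \<le> indicator {0..} x *\<^sub>R B x"
      by (intro always_eventually allI AE_I2) (simp add: g_def bound split: split_indicator)
  qed
  moreover have "\<forall>\<^sub>F u in at_top. integral\<^sup>L lborel (g u) = (LBINT x:{0..}. G u x)"
    using eventually_ge_at_top[of 1]
    by eventually_elim (simp add: g_def set_lebesgue_integral_def max_def)
  ultimately show ?thesis
    unfolding set_lebesgue_integral_def by (rule Lim_transform_eventually)
qed

lemma rescaled_cov_integral_tendsto:
  assumes "0 < \<alpha>" "\<alpha> \<le> 2" "0 \<le> c" "0 \<le> r" "0 \<le> s"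
  shows "((\<lambda>u. LBINT x:{0..}. of_real (u powr \<alpha>) * cov_integrand \<alpha> c r s u (of_real (x / u) * cis (pi/4)))
           \<longlongrightarrow> (LBINT x:{0..}. - of_real (2 * c * r * s) * gamma_integrand \<alpha> (of_real x * cis (pi/4)))) at_top"
proof (rule set_integral_dominated_convergence_at_top)
  show "continuous_on {0..}
      (\<lambda>x. of_real (u powr \<alpha>) * cov_integrand \<alpha> c r s u (of_real (x / u) * cis (pi/4)))" if "1 \<le> u" for u
    using assms(1) that by (intro continuous_on_rescaled_cov_integrand) auto
  show "continuous_on {0..} (\<lambda>x. - of_real (2 * c * r * s) * gamma_integrand \<alpha> (of_real x * cis (pi/4)))"
    using assms by (intro continuous_intros continuous_on_ray[OF continuous_on_gamma_integrand]) auto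
  show "((\<lambda>u. of_real (u powr \<alpha>) * cov_integrand \<alpha> c r s u (of_real (x / u) * cis (pi/4)))
      \<longlongrightarrow> - of_real (2 * c * r * s) * gamma_integrand \<alpha> (of_real x * cis (pi/4))) at_top" if "0 \<le> x" for x
    using that assms by (intro rescaled_cov_integrand_tendsto)
  show "norm (of_real (u powr \<alpha>) * cov_integrand \<alpha> c r s u (of_real (x / u) * cis (pi/4)))
      \<le> 2 * c * r * s * (x powr \<alpha> * exp (- (sin (pi/4) * x)))" if "1 \<le> u" "0 \<le> x" for u x
    using that assms by (intro norm_rescaled_cov_integrand_le) auto
  show "set_integrable lborel {0..} (\<lambda>x. 2 * c * r * s * (x powr \<alpha> * exp (- (sin (pi/4) * x))))"
    using assms by (intro set_integrable_mult_right set_integrable_powr_mult_exp) (auto simp: sin_45)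
qed

lemma fACA_second_difference_rescaled:
  assumes "0 < u" "0 < \<alpha>" "\<alpha> \<le> 2" "0 \<le> c" "0 \<le> r" "0 \<le> s"
  shows "u powr (\<alpha> + 1) * (fACA \<alpha> c a (u+r+s) - fACA \<alpha> c a (u+r) - fACA \<alpha> c a (u+s) + fACA \<alpha> c a u)
       = - (2 / (a * pi)) * Re (cis (pi/4) *
           (LBINT x:{0..}. of_real (u powr \<alpha>) * cov_integrand \<alpha> c r s u (of_real (x / u) * cis (pi/4))))"
proof -
  define z where "z = cis (pi/4) * (LBINT x:{0..}. cov_integrand \<alpha> c r s u (of_real (x / u) * cis (pi/4)))"
  have "(LBINT x:{0..}. cov_integrand \<alpha> c r s u (of_real x))
      = cis (pi/4) * (of_real (1/u) * (LBINT x:{0..}. cov_integrand \<alpha> c r s u (of_real (x / u) * cis (pi/4))))"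
    using assms
    by (simp only: cov_integrand_rotate
        set_integral_rescale[OF assms(1), of "\<lambda>x. cov_integrand \<alpha> c r s u (of_real x * cis (pi/4))"])
  also have "\<dots> = of_real (1/u) * z" by (simp add: z_def)
  finally have "Re (LBINT x:{0..}. cov_integrand \<alpha> c r s u (of_real x)) = Re z / u" by simp
  then have difference: "fACA \<alpha> c a (u+r+s) - fACA \<alpha> c a (u+r) - fACA \<alpha> c a (u+s) + fACA \<alpha> c a u
      = - (2 / (a * pi)) * (Re z / u)"
    using fACA_second_difference_eq[OF assms(1,2,4,5,6)] by simp
  have "Re (cis (pi/4) *
      (LBINT x:{0..}. of_real (u powr \<alpha>) * cov_integrand \<alpha> c r s u (of_real (x / u) * cis (pi/4))))
      = u powr \<alpha> * Re z"
    by (simp add: z_def set_integral_mult_right algebra_simps)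
  then show ?thesis
    unfolding difference using assms(1) by (simp add: powr_add field_simps)
qed

lemma fACA_second_difference_tendsto:
  assumes "0 < \<alpha>" "\<alpha> \<le> 2" "0 \<le> c" "0 \<le> r" "0 \<le> s"
  shows "((\<lambda>u. u powr (\<alpha> + 1) * (fACA \<alpha> c a (u+r+s) - fACA \<alpha> c a (u+r) - fACA \<alpha> c a (u+s) + fACA \<alpha> c a u))
           \<longlongrightarrow> - (4 * c * r * s / (a * pi) * Gamma (\<alpha> + 1) * sin (\<alpha> * pi / 2))) at_top"
proof (rule Lim_transform_eventually)
  define L where "L = (LBINT x:{0..}. gamma_integrand \<alpha> (of_real x * cis (pi/4)))"
  have "((\<lambda>u. - (2 / (a * pi)) * Re (cis (pi/4) *
      (LBINT x:{0..}. of_real (u powr \<alpha>) * cov_integrand \<alpha> c r s u (of_real (x / u) * cis (pi/4)))))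
      \<longlongrightarrow> - (2 / (a * pi)) * Re (cis (pi/4) * (- of_real (2 * c * r * s) * L))) at_top"
    using rescaled_cov_integral_tendsto[OF assms]
    unfolding L_def set_integral_mult_right by (intro tendsto_mult_left tendsto_Re)
  also have "- (2 / (a * pi)) * Re (cis (pi/4) * (- of_real (2 * c * r * s) * L))
      = - (2 / (a * pi)) * (- (2 * c * r * s) * Re (cis (pi/4) * L))"
    by (simp add: algebra_simps)
  also have "Re (cis (pi/4) * L) = - (Gamma (\<alpha> + 1) * sin (\<alpha> * pi / 2))"
    unfolding L_def set_integral_gamma_integrand_ray[OF assms(1)] by simp
  also have "- (2 / (a * pi)) * (- (2 * c * r * s) * - (Gamma (\<alpha> + 1) * sin (\<alpha> * pi / 2)))
      = - (4 * c * r * s / (a * pi) * Gamma (\<alpha> + 1) * sin (\<alpha> * pi / 2))"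
    by (simp add: mult_ac)
  finally show "((\<lambda>u. - (2 / (a * pi)) * Re (cis (pi/4) *
      (LBINT x:{0..}. of_real (u powr \<alpha>) * cov_integrand \<alpha> c r s u (of_real (x / u) * cis (pi/4)))))
      \<longlongrightarrow> - (4 * c * r * s / (a * pi) * Gamma (\<alpha> + 1) * sin (\<alpha> * pi / 2))) at_top" .
  show "\<forall>\<^sub>F u in at_top. - (2 / (a * pi)) * Re (cis (pi/4) *
      (LBINT x:{0..}. of_real (u powr \<alpha>) * cov_integrand \<alpha> c r s u (of_real (x / u) * cis (pi/4))))
      = u powr (\<alpha> + 1) * (fACA \<alpha> c a (u+r+s) - fACA \<alpha> c a (u+r) - fACA \<alpha> c a (u+s) + fACA \<alpha> c a u)"
    using eventually_gt_at_top[of 0]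
    by eventually_elim (use assms in \<open>simp only: fACA_second_difference_rescaled\<close>)
qed

lemma covG_increments_eq:
  assumes "0 < u" "0 \<le> r" "0 \<le> s"
  shows "covG \<alpha> c a s (r + s + u) - covG \<alpha> c a s (s + u) - covG \<alpha> c a 0 (r + s + u) + covG \<alpha> c a 0 (s + u)
       = (fACA \<alpha> c a (u+r+s) - fACA \<alpha> c a (u+r) - fACA \<alpha> c a (u+s) + fACA \<alpha> c a u) / 2"
proof -
  have "\<bar>s - (r + s + u)\<bar> = u + r" "\<bar>s - (s + u)\<bar> = u"
    "\<bar>0 - (r + s + u)\<bar> = u + r + s" "\<bar>0 - (s + u)\<bar> = u + s"
    using assms by auto
  moreover have "fACA \<alpha> c a 0 = 0" by (simp add: fACA_def)
  ultimately show ?thesis unfolding covG_def by (simp add: field_simps)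
qed

lemma covG_increments_tendsto:
  assumes "0 < \<alpha>" "\<alpha> \<le> 2" "0 \<le> c" "0 \<le> r" "0 \<le> s"
  shows "((\<lambda>u. (covG \<alpha> c a s (r + s + u) - covG \<alpha> c a s (s + u)
                - covG \<alpha> c a 0 (r + s + u) + covG \<alpha> c a 0 (s + u)) / u powr (- (\<alpha> + 1)))
           \<longlongrightarrow> - (2 * c * r * s / (a * pi) * Gamma (\<alpha> + 1) * sin (\<alpha> * pi / 2))) at_top"
proof (rule Lim_transform_eventually)
  show "((\<lambda>u. u powr (\<alpha> + 1) * (fACA \<alpha> c a (u+r+s) - fACA \<alpha> c a (u+r) - fACA \<alpha> c a (u+s) + fACA \<alpha> c a u) / 2)
      \<longlongrightarrow> - (2 * c * r * s / (a * pi) * Gamma (\<alpha> + 1) * sin (\<alpha> * pi / 2))) at_top"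
    using tendsto_divide[OF fACA_second_difference_tendsto[OF assms, where a=a] tendsto_const[of 2]]
    by (simp add: mult_ac)
  show "\<forall>\<^sub>F u in at_top.
      u powr (\<alpha> + 1) * (fACA \<alpha> c a (u+r+s) - fACA \<alpha> c a (u+r) - fACA \<alpha> c a (u+s) + fACA \<alpha> c a u) / 2
      = (covG \<alpha> c a s (r + s + u) - covG \<alpha> c a s (s + u)
          - covG \<alpha> c a 0 (r + s + u) + covG \<alpha> c a 0 (s + u)) / u powr (- (\<alpha> + 1))"
    using eventually_gt_at_top[of 0]
  proof eventually_elim
    case (elim u)
    have "0 < u powr (\<alpha> + 1)" using elim by simp
    then show ?case
      unfolding covG_increments_eq[OF elim assms(4,5)] powr_minus by (simp add: field_simps)
  qed
qed

theorem proposition3p15: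
  fixes \<alpha> c a s r :: real
  assumes "0 < \<alpha>" "\<alpha> < 2" "0 < c" "0 < a" "0 < s" "0 < r"
  shows "\<exists>k::real. k \<noteq> 0 \<and>
    (\<lambda>u. covG \<alpha> c a s (r + s + u) - covG \<alpha> c a s (s + u)
          - covG \<alpha> c a 0 (r + s + u) + covG \<alpha> c a 0 (s + u))
    \<sim>[at_top] (\<lambda>u. k * u powr (- (\<alpha> + 1)))"
proof -
  define k where "k = - (2 * c * r * s / (a * pi) * Gamma (\<alpha> + 1) * sin (\<alpha> * pi / 2))"
  have "0 < sin (\<alpha> * pi / 2)" using assms by (intro sin_gt_zero) auto
  moreover have "0 < Gamma (\<alpha> + 1)" using assms by (intro Gamma_real_pos) simp
  ultimately have "0 < 2 * c * r * s / (a * pi) * Gamma (\<alpha> + 1) * sin (\<alpha> * pi / 2)"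
    using assms by (intro mult_pos_pos divide_pos_pos) auto
  then have "k \<noteq> 0" unfolding k_def by linarith
  moreover have "((\<lambda>u. (covG \<alpha> c a s (r + s + u) - covG \<alpha> c a s (s + u)
      - covG \<alpha> c a 0 (r + s + u) + covG \<alpha> c a 0 (s + u)) / u powr (- (\<alpha> + 1))) \<longlongrightarrow> k) at_top"
    unfolding k_def using assms by (intro covG_increments_tendsto) auto
  ultimately show ?thesis by (intro exI[of _ k] conjI asymp_equivI'_const)
qed

end
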